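(* Let $\lambda>0$, $\rho>1$, $n\ge1$, and let $X,X_1,\ldots,X_n$ be i.i.d. $\mathrm{Exp}(\lambda)$. Let $J_n\coloneqq\log_\rho X_{(n)}$ where $X_{(n)}=\max_i X_i$, and define \[p_{\mathrm{last}}\coloneqq\Pr\left(\rho^{\lceil J_n\rceil-1}<X\le\rho^{\lceil J_n\rceil}\right),\qquad p_{\mathrm{tail}}\coloneqq\Pr\left(X>\rho^{\lceil J_n\rceil}\right)\] (probabilities taken jointly over $X$ and $X_1,\ldots,X_n$). Then \[p_{\mathrm{last}}\le nB(1+1/\rho,n)-nB(1+\rho,n)\sim\frac{\Gamma(1+1/\rho)}{n^{1/\rho}}-\frac{\Gamma(1+\rho)}{n^\rho},\] \[\frac{\Gamma(1+\rho)}{n^\rho}\sim nB(1+\rho,n)\le p_{\mathrm{tail}}\le\frac{1}{n+1}\sim\frac1n,\] where the asymptotic equivalences hold as $n\to\infty$.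
   Context: $\mathrm{Exp}(\lambda)$ has density $\lambda e^{-\lambda x}$ on $(0,\infty)$. $B$ is the Beta function and $\Gamma$ the Gamma function; $\sim$ means the ratio tends to 1. *)

theory Defs
  imports "HOL-Probability.Probability" "HOL-Library.Landau_Symbols"
begin

end

theory Submission
  imports Defs "HOL-Real_Asymp.Real_Asymp"
begin

text \<open>
  Put Y = max X_i and K = \<rho>^\<lceil>log_\<rho> Y\<rceil>. Since Y \<le> K < \<rho> Y almost surely, the events
  X > \<rho> Y, X > K, X > Y are nested and X > K / \<rho> implies X > Y / \<rho>, so every bound reduces
  to P(X > c Y) for c \<in> {\<rho>, 1, 1 / \<rho>}. By independence,
  P(X > c Y) = \<integral> \<lambda> exp(-\<lambda> x) (1 - exp(-\<lambda> x / c))^n dx, and the substitution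
  v = 1 - exp(-\<lambda> x / c) turns this into c B(n + 1, c) = n B(1 + c, n), which is 1 / (n + 1)
  for c = 1. The asymptotics follow from Gauss's product formula for \<Gamma>, which says
  m^c \<cdot> m B(1 + c, m) \<longrightarrow> \<Gamma>(1 + c).
\<close>

lemma mult_Beta_plus1_swap:
  fixes a c :: real
  assumes "0 < a" "0 < c"
  shows "c * Beta (a + 1) c = a * Beta (1 + c) a"
proof -
  have nonpos: "a \<notin> \<int>\<^sub>\<le>\<^sub>0" "c \<notin> \<int>\<^sub>\<le>\<^sub>0"
    using assms by (auto elim!: nonpos_Ints_cases)
  have "(a + c) * (c * Beta (a + 1) c) = (a + c) * (a * Beta a (c + 1))"
    using Beta_plus1_left[OF nonpos(1), of c] Beta_plus1_right[OF nonpos(2), of a]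
    by (simp add: algebra_simps)
  then show ?thesis
    using assms by (simp add: Beta_commute add.commute)
qed

lemma mult_Beta_2_left:
  fixes a :: real
  assumes "0 < a"
  shows "a * Beta 2 a = 1 / (a + 1)"
proof -
  have "a \<notin> \<int>\<^sub>\<le>\<^sub>0" using assms by (auto elim!: nonpos_Ints_cases)
  then have "a * Beta 1 a = 1"
    using assms Gamma_plus1[of a] Gamma_eq_zero_iff[of a] by (simp add: Beta_def add.commute)
  moreover have "(1 + a) * Beta 2 a = Beta 1 a"
    using Beta_plus1_left[of 1 a] by simp
  ultimately show ?thesis
    using assms by (simp add: field_simps)
qed

lemma interval_integral_Beta:
  fixes a b :: real
  assumes "0 < a" "0 < b"
  shows "set_integrable lborel (einterval 0 1) (\<lambda>v. v powr (a - 1) * (1 - v) powr (b - 1))"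
    and "(LBINT v=0..1. v powr (a - 1) * (1 - v) powr (b - 1)) = Beta a b"
proof -
  let ?f = "\<lambda>v::real. v powr (a - 1) * (1 - v) powr (b - 1)"
  have einterval: "einterval 0 1 = {0<..<1::real}"
    by (simp add: zero_ereal_def one_ereal_def)
  have Beta: "(?f has_integral Beta a b) {0<..<1}"
    using has_integral_Beta_real[OF assms] by (simp add: has_integral_Icc_iff_Ioo)
  then have "?f absolutely_integrable_on {0<..<1}"
    by (intro nonnegative_absolutely_integrable_1) (auto simp: has_integral_integrable)
  then show integrable: "set_integrable lborel (einterval 0 1) ?f"
    unfolding einterval set_integrable_def
    by (subst integrable_completion[symmetric])
      (auto intro!: borel_measurable_times borel_measurable_indicator simp: set_integrable_def)
  have "(LBINT v=0..1. ?f v) = integral {0<..<1} ?f"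
    using integrable unfolding einterval
    by (simp add: interval_lebesgue_integral_def zero_ereal_def one_ereal_def set_borel_integral_eq_integral)
  also have "\<dots> = Beta a b"
    using Beta by (rule integral_unique)
  finally show "(LBINT v=0..1. ?f v) = Beta a b" .
qed

lemma isCont_exponential_density:
  fixes l x :: real
  assumes "0 < x"
  shows "isCont (exponential_density l) x"
proof -
  have "\<forall>\<^sub>F y in nhds x. y \<in> {0<..}"
    using assms by (intro eventually_nhds_in_open) auto
  then have "\<forall>\<^sub>F y in nhds x. exponential_density l y = l * exp (- y * l)"
    by eventually_elim (auto simp: exponential_density_def)
  moreover have "isCont (\<lambda>y. l * exp (- y * l)) x"
    by (intro continuous_intros)
  ultimately show ?thesis
    by (rule isCont_cong[THEN iffD2])
qed

lemma exponential_density_cdf_power_log_subst: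
  fixes c l v :: real and n :: nat
  assumes c: "0 < c" and l: "0 < l" and v: "0 < v" "v < 1"
  defines "x \<equiv> - (c / l) * ln (1 - v)"
  shows "exponential_density l x * (1 - exp (- (x / c) * l)) ^ n * (c / (l * (1 - v)))
    = c * (v ^ n * (1 - v) powr (c - 1))"
proof -
  have "0 < x"
    using v c l by (simp add: x_def divide_neg_pos mult_pos_neg)
  moreover have "exp (- (x / c) * l) = 1 - v" "exp (- x * l) = (1 - v) powr c"
    using v c l by (simp_all add: x_def powr_def)
  ultimately have "exponential_density l x * (1 - exp (- (x / c) * l)) ^ n * (c / (l * (1 - v)))
      = l * (1 - v) powr c * v ^ n * (c / (l * (1 - v)))"
    by (simp add: exponential_density_def)
  also have "\<dots> = c * (v ^ n * ((1 - v) powr c / (1 - v)))"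
    using l v by (simp add: field_simps)
  finally show ?thesis
    using v by (simp add: powr_diff)
qed

lemma interval_integral_exponential_density_cdf_power:
  fixes c l :: real and n :: nat
  assumes c: "0 < c" and l: "0 < l"
  defines "h \<equiv> \<lambda>x. exponential_density l x * (1 - exp (- (x / c) * l)) ^ n"
  shows "set_integrable lborel (einterval 0 \<infinity>) h"
    and "(LBINT x=0..\<infinity>. h x) = c * Beta (real n + 1) c"
proof -
  define \<phi> where "\<phi> v = v powr (real n + 1 - 1) * (1 - v) powr (c - 1)" for v :: real
  \<comment> \<open>\<open>g\<close> inverts \<open>x \<mapsto> 1 - exp (- (x / c) * l)\<close>, the distribution function of \<open>c X\<close>\<close>
  define g where "g v = - (c / l) * ln (1 - v)" for v :: real
  define g' where "g' v = c / (l * (1 - v))" for v :: real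
  have subst: "h (g v) * g' v = c * \<phi> v" if "0 < v" "v < 1" for v
    unfolding h_def g_def g'_def \<phi>_def using exponential_density_cdf_power_log_subst[OF c l that, of n] that
    by (simp only: add_diff_cancel_right' powr_realpow)
  have "set_integrable lborel (einterval 0 1) (\<lambda>v. c * \<phi> v)"
    using interval_integral_Beta(1)[of "real n + 1" c] c by (simp add: \<phi>_def)
  then have \<phi>_integrable: "set_integrable lborel (einterval 0 1) (\<lambda>v. h (g v) * g' v)"
    by (rule set_integrable_cong[THEN iffD1, rotated -1])
      (auto simp: subst zero_ereal_def one_ereal_def)
  have h_cont: "isCont h x" if "0 < x" for x
    unfolding h_def using that c by (intro continuous_intros isCont_exponential_density) auto
  have h_nonneg: "0 \<le> h x" for x
    using c l by (auto simp: h_def exponential_density_def)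
  have g_pos: "0 < g v" if "0 < v" "v < 1" for v
    using that c l by (simp add: g_def divide_neg_pos mult_pos_neg)
  have g_deriv: "DERIV g v :> g' v" if "v < 1" for v
    unfolding g_def g'_def using that l
    by (auto intro!: derivative_eq_intros simp: field_simps)
  have g'_cont: "isCont g' v" if "v < 1" for v
    unfolding g'_def using that l by (intro continuous_intros) auto
  have g'_nonneg: "0 \<le> g' v" if "v \<le> 1" for v
    unfolding g'_def using that c l by simp
  have "(g \<longlongrightarrow> 0) (at_right 0)" "filterlim g at_top (at_left 1)"
    unfolding g_def using c l by real_asymp+
  then have g_lim: "((ereal \<circ> g \<circ> real_of_ereal) \<longlongrightarrow> 0) (at_right 0)"
    "((ereal \<circ> g \<circ> real_of_ereal) \<longlongrightarrow> \<infinity>) (at_left 1)"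
    by (simp_all add: zero_ereal_def one_ereal_def ereal_tendsto_simps)
  have "set_integrable lborel (einterval 0 \<infinity>) h \<and>
      (LBINT x=0..\<infinity>. h x) = (LBINT v=0..1. h (g v) * g' v)"
    using interval_integral_substitution_nonneg[of 0 1 g g' h 0 \<infinity>] g_lim \<phi>_integrable
      g_deriv g'_cont g'_nonneg h_cont g_pos h_nonneg
    by (auto simp: zero_ereal_def one_ereal_def)
  moreover have "(LBINT v=0..1. h (g v) * g' v) = (LBINT v=0..1. c * \<phi> v)"
    by (rule interval_integral_cong) (auto simp: subst zero_ereal_def one_ereal_def)
  ultimately show "set_integrable lborel (einterval 0 \<infinity>) h"
    and "(LBINT x=0..\<infinity>. h x) = c * Beta (real n + 1) c"
    using interval_integral_Beta(2)[of "real n + 1" c] c by (simp_all add: \<phi>_def)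
qed

lemma nn_integral_lborel_eq_interval_integral_to_infinity:
  fixes f :: "real \<Rightarrow> real"
  assumes f: "set_integrable lborel (einterval 0 \<infinity>) f"
    and nonneg: "\<And>x. 0 \<le> f x" and vanish: "\<And>x. x < 0 \<Longrightarrow> f x = 0"
  shows "(\<integral>\<^sup>+x. ennreal (f x) \<partial>lborel) = ennreal (LBINT x=0..\<infinity>. f x)"
proof -
  have "AE x in lborel. ennreal (f x) = ennreal (indicator {0<..} x * f x)"
    using AE_lborel_singleton[of 0]
    by eventually_elim (auto simp: vanish indicator_def)
  then have "(\<integral>\<^sup>+x. ennreal (f x) \<partial>lborel) = (\<integral>\<^sup>+x. ennreal (indicator {0<..} x * f x) \<partial>lborel)"
    by (rule nn_integral_cong_AE)
  also have "\<dots> = ennreal (LBINT x=0..\<infinity>. f x)"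
    using f nonneg
    by (subst nn_integral_eq_integral)
      (auto simp: set_integrable_def interval_lebesgue_integral_def set_lebesgue_integral_def zero_ereal_def)
  finally show ?thesis .
qed

lemma nn_integral_exponential_density_cdf_power:
  fixes c l :: real and n :: nat
  assumes "0 < c" "0 < l"
  shows "(\<integral>\<^sup>+x. ennreal (exponential_density l x * (1 - exp (- (x / c) * l)) ^ n) \<partial>lborel)
    = ennreal (c * Beta (real n + 1) c)"
proof (subst nn_integral_lborel_eq_interval_integral_to_infinity)
  show "0 \<le> exponential_density l x * (1 - exp (- (x / c) * l)) ^ n" for x
    using assms by (auto simp: exponential_density_def)
qed (use assms interval_integral_exponential_density_cdf_power in \<open>simp_all add: exponential_density_def\<close>)

lemma Gamma_series'_eq_mult_Beta:
  fixes c :: real and m :: nat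
  assumes "0 < c" "0 < m"
  shows "Gamma_series' (1 + c) m = real m * Beta (1 + c) (real m) * real m powr c"
proof -
  have "1 + c \<notin> \<int>\<^sub>\<le>\<^sub>0"
    using assms by (auto elim!: nonpos_Ints_cases)
  then have pochhammer: "pochhammer (1 + c) m = Gamma (1 + c + real m) / Gamma (1 + c)"
    by (simp add: pochhammer_Gamma)
  have fact: "fact (m - 1) = Gamma (real m)"
    using assms Gamma_fact[of "m - 1", where 'a=real] by simp
  have exp: "exp ((1 + c) * ln (real m)) = real m * real m powr c"
    using assms by (simp add: powr_def exp_add algebra_simps)
  have "0 < Gamma (1 + c)" "0 < Gamma (1 + c + real m)"
    using assms by auto
  then show ?thesis
    unfolding Gamma_series'_def Beta_def pochhammer fact
    by (simp add: exp)
qed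

lemma mult_Beta_asymp_equiv:
  fixes c :: real
  assumes "0 < c"
  shows "(\<lambda>m::nat. real m * Beta (1 + c) (real m)) \<sim>[at_top] (\<lambda>m. Gamma (1 + c) / real m powr c)"
proof -
  have "(\<lambda>m. real m * Beta (1 + c) (real m) / (1 / real m powr c)) \<longlonglongrightarrow> Gamma (1 + c)"
  proof (rule Lim_transform_eventually[OF Gamma_series'_LIMSEQ])
    show "\<forall>\<^sub>F m in sequentially. Gamma_series' (1 + c) m = real m * Beta (1 + c) (real m) / (1 / real m powr c)"
      using eventually_gt_at_top[of 0] by eventually_elim (use assms in \<open>simp add: Gamma_series'_eq_mult_Beta\<close>)
  qed
  moreover have "Gamma (1 + c) \<noteq> 0"
    using Gamma_real_pos[of "1 + c"] assms by linarith
  ultimately have "(\<lambda>m::nat. real m * Beta (1 + c) (real m)) \<sim>[at_top] (\<lambda>m. Gamma (1 + c) * (1 / real m powr c))"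
    by (rule asymp_equivI'_const)
  then show ?thesis
    by simp
qed

lemma asymp_equiv_diff_smallo:
  fixes f g F G :: "'a \<Rightarrow> real"
  assumes "f \<sim>[L] F" "g \<sim>[L] G" "G \<in> o[L](F)"
  shows "(\<lambda>x. f x - g x) \<sim>[L] (\<lambda>x. F x - G x)"
proof -
  have "g \<in> o[L](F)"
    using landau_o.big_small_trans[OF asymp_equiv_imp_bigo[OF assms(2)] assms(3)] .
  then have "(\<lambda>x. - g x) \<in> o[L](F)"
    by simp
  then have "(\<lambda>x. f x + - g x) \<sim>[L] F"
    using assms(1) by (rule asymp_equiv_add_right[THEN iffD2])
  moreover have "(\<lambda>x. F x + - G x) \<sim>[L] F"
    by (rule asymp_equiv_add_right[THEN iffD2, OF _ asymp_equiv_refl]) (use assms(3) in simp)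
  ultimately show ?thesis
    using asymp_equiv_trans[OF _ asymp_equiv_symI] by simp
qed

lemma Beta_bounds_asymp_equiv:
  fixes \<rho> :: real
  assumes "1 < \<rho>"
  shows "(\<lambda>m::nat. real m * Beta (1 + 1 / \<rho>) (real m) - real m * Beta (1 + \<rho>) (real m))
      \<sim>[at_top] (\<lambda>m. Gamma (1 + 1 / \<rho>) / real m powr (1 / \<rho>) - Gamma (1 + \<rho>) / real m powr \<rho>)"
    and "(\<lambda>m::nat. Gamma (1 + \<rho>) / real m powr \<rho>) \<sim>[at_top] (\<lambda>m. real m * Beta (1 + \<rho>) (real m))"
proof -
  have pos: "0 < \<rho>" "0 < 1 / \<rho>"
    using assms by simp_all
  have "1 / \<rho> < \<rho>"
    using assms by (simp add: field_simps) (metis less_1_mult)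
  then have "(\<lambda>m::nat. 1 / real m powr \<rho>) \<in> o(\<lambda>m. 1 / real m powr (1 / \<rho>))"
    by real_asymp
  moreover have "0 < Gamma (1 + \<rho>)" "0 < Gamma (1 + 1 / \<rho>)"
    using pos by (auto intro!: Gamma_real_pos add_pos_pos)
  then have "Gamma (1 + \<rho>) \<noteq> 0" "Gamma (1 + 1 / \<rho>) \<noteq> 0"
    by simp_all
  ultimately have "(\<lambda>m::nat. Gamma (1 + \<rho>) * (1 / real m powr \<rho>))
      \<in> o(\<lambda>m. Gamma (1 + 1 / \<rho>) * (1 / real m powr (1 / \<rho>)))"
    by (simp only: landau_o.small.cmult_in_iff landau_o.small.cmult not_False_eq_True)
  then have "(\<lambda>m::nat. Gamma (1 + \<rho>) / real m powr \<rho>) \<in> o(\<lambda>m. Gamma (1 + 1 / \<rho>) / real m powr (1 / \<rho>))"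
    by simp
  with mult_Beta_asymp_equiv[OF pos(2)] mult_Beta_asymp_equiv[OF pos(1)]
  show "(\<lambda>m::nat. real m * Beta (1 + 1 / \<rho>) (real m) - real m * Beta (1 + \<rho>) (real m))
      \<sim>[at_top] (\<lambda>m. Gamma (1 + 1 / \<rho>) / real m powr (1 / \<rho>) - Gamma (1 + \<rho>) / real m powr \<rho>)"
    by (rule asymp_equiv_diff_smallo)
  show "(\<lambda>m::nat. Gamma (1 + \<rho>) / real m powr \<rho>) \<sim>[at_top] (\<lambda>m. real m * Beta (1 + \<rho>) (real m))"
    using mult_Beta_asymp_equiv[OF pos(1)] by (rule asymp_equiv_symI)
qed

lemma (in prob_space) AE_distributed_lborel_neq:
  assumes "distributed M lborel Z f"
  shows "AE \<omega> in M. Z \<omega> \<noteq> t"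
proof -
  have Z[measurable]: "Z \<in> borel_measurable M"
    using assms by (auto simp: distributed_def)
  have "AE x in lborel. f x * indicator {t} x = 0"
    using AE_lborel_singleton[of t] by eventually_elim simp
  then have "emeasure M (Z -` {t} \<inter> space M) = 0"
    using distributed_emeasure[OF assms, of "{t}"] by (simp add: nn_integral_zero')
  then have "prob {\<omega> \<in> space M. Z \<omega> = t} = 0"
    by (simp add: emeasure_eq_measure vimage_def Int_def conj_commute)
  then show ?thesis
    by (subst (asm) prob_eq_0) auto
qed

lemma (in prob_space) exponential_distributedD_lt:
  assumes D: "distributed M lborel Z (exponential_density l)" and "0 \<le> t" "0 < l"
  shows "\<P>(\<omega> in M. Z \<omega> < t) = 1 - exp (- t * l)"
proof -
  have [measurable]: "Z \<in> borel_measurable M"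
    using D by (auto simp: distributed_def)
  have "\<P>(\<omega> in M. Z \<omega> < t) = \<P>(\<omega> in M. Z \<omega> \<le> t)"
    using AE_distributed_lborel_neq[OF D, of t]
    by (intro finite_measure_eq_AE) (auto elim!: eventually_mono)
  then show ?thesis
    using exponential_distributedD_le[OF D] assms by simp
qed

lemma (in prob_space) AE_exponential_distributed_pos:
  assumes D: "distributed M lborel Z (exponential_density l)" and "0 < l"
  shows "AE \<omega> in M. 0 < Z \<omega>"
proof -
  have [measurable]: "Z \<in> borel_measurable M"
    using D by (auto simp: distributed_def)
  have "\<P>(\<omega> in M. Z \<omega> \<le> 0) = 0"
    using exponential_distributedD_le[OF D order.refl] assms by simp
  then show ?thesis
    by (subst (asm) prob_eq_0) auto
qed

lemma (in prob_space) indep_vars_Max: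
  fixes X :: "'i \<Rightarrow> 'a \<Rightarrow> real"
  assumes I: "finite I" "i \<notin> I" and indep: "indep_vars (\<lambda>_. borel) X (insert i I)"
  shows "indep_var borel (X i) borel (\<lambda>\<omega>. Max ((\<lambda>i. X i \<omega>)`I))"
proof -
  have "indep_var
    borel ((\<lambda>f. f i) \<circ> (\<lambda>\<omega>. restrict (\<lambda>i. X i \<omega>) {i}))
    borel ((\<lambda>f. Max (f`I)) \<circ> (\<lambda>\<omega>. restrict (\<lambda>i. X i \<omega>) I))"
    using I by (intro indep_var_compose[OF indep_var_restrict[OF indep]] borel_measurable_Max) auto
  also have "((\<lambda>f. f i) \<circ> (\<lambda>\<omega>. restrict (\<lambda>i. X i \<omega>) {i})) = X i"
    by auto
  also have "((\<lambda>f. Max (f`I)) \<circ> (\<lambda>\<omega>. restrict (\<lambda>i. X i \<omega>) I)) = (\<lambda>\<omega>. Max ((\<lambda>i. X i \<omega>)`I))"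
    by (auto cong: rev_conj_cong)
  finally show ?thesis .
qed

lemma (in prob_space) prob_Max_less:
  fixes X :: "'i \<Rightarrow> 'a \<Rightarrow> real"
  assumes "finite I" "I \<noteq> {}" and indep: "indep_vars (\<lambda>_. borel) X I"
  shows "\<P>(\<omega> in M. Max ((\<lambda>i. X i \<omega>) ` I) < t) = (\<Prod>i\<in>I. \<P>(\<omega> in M. X i \<omega> < t))"
proof -
  have "{\<omega> \<in> space M. Max ((\<lambda>i. X i \<omega>) ` I) < t} = (\<Inter>i\<in>I. X i -` {..<t} \<inter> space M)"
    using assms by auto
  also have "prob \<dots> = (\<Prod>i\<in>I. prob (X i -` {..<t} \<inter> space M))"
    using assms by (intro indep_varsD[OF indep]) auto
  finally show ?thesis
    by (simp add: vimage_def Int_def conj_commute)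
qed

lemma (in prob_space) emeasure_less_indep_var_density:
  fixes X Y :: "'a \<Rightarrow> real"
  assumes indep: "indep_var borel X borel Y" and D: "distributed M lborel X f"
  shows "emeasure M {\<omega> \<in> space M. Y \<omega> < X \<omega>}
    = (\<integral>\<^sup>+x. f x * emeasure M {\<omega> \<in> space M. Y \<omega> < x} \<partial>lborel)"
proof -
  define A where "A = {p :: real \<times> real. snd p < fst p}"
  have "A = {p \<in> space (borel \<Otimes>\<^sub>M borel). snd p < fst p}"
    by (simp add: A_def space_pair_measure)
  also have "\<dots> \<in> sets (borel \<Otimes>\<^sub>M borel)"
    by measurable
  finally have A: "A \<in> sets (borel \<Otimes>\<^sub>M borel)" .
  have X_meas[measurable]: "X \<in> borel_measurable M" and Y_meas[measurable]: "Y \<in> borel_measurable M"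
    using indep by (auto dest: indep_var_rv1 indep_var_rv2)
  interpret Y: prob_space "distr M borel Y"
    by (rule prob_space_distr) simp
  have X_distr: "distr M borel X = density lborel f"
  proof -
    have "distr M borel X = distr M lborel X"
      by (rule distr_cong) auto
    then show ?thesis
      using distributed_distr_eq_density[OF D] by simp
  qed
  have Y_section: "emeasure (distr M borel Y) (Pair x -` A) = emeasure M {\<omega> \<in> space M. Y \<omega> < x}" for x
    by (subst emeasure_distr) (auto simp: A_def intro!: arg_cong[where f="emeasure M"])
  have "emeasure M {\<omega> \<in> space M. Y \<omega> < X \<omega>} = emeasure (distr M (borel \<Otimes>\<^sub>M borel) (\<lambda>\<omega>. (X \<omega>, Y \<omega>))) A"
    by (subst emeasure_distr[OF _ A]) (auto simp: A_def intro!: arg_cong[where f="emeasure M"])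
  also have "\<dots> = emeasure (distr M borel X \<Otimes>\<^sub>M distr M borel Y) A"
    using indep by (simp add: indep_var_distribution_eq)
  also have "\<dots> = (\<integral>\<^sup>+x. emeasure (distr M borel Y) (Pair x -` A) \<partial>distr M borel X)"
    by (rule Y.emeasure_pair_measure_alt) (simp add: A)
  also have "\<dots> = (\<integral>\<^sup>+x. f x * emeasure (distr M borel Y) (Pair x -` A) \<partial>lborel)"
  proof -
    have "A \<in> sets (lborel \<Otimes>\<^sub>M distr M borel Y)"
      using A by (simp cong: sets_pair_measure_cong)
    then show ?thesis
      unfolding X_distr
      by (intro nn_integral_density distributed_borel_measurable[OF D] Y.measurable_emeasure_Pair)
  qed
  finally show ?thesis
    by (simp only: Y_section)
qed

lemma (in prob_space) prob_scaled_less_exponential: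
  fixes X Y :: "'a \<Rightarrow> real"
  assumes "0 < l" "0 < c"
    and D: "distributed M lborel X (exponential_density l)"
    and indep: "indep_var borel X borel Y"
    and cdf: "\<And>t. 0 \<le> t \<Longrightarrow> \<P>(\<omega> in M. Y \<omega> < t) = (1 - exp (- t * l)) ^ n"
  shows "\<P>(\<omega> in M. c * Y \<omega> < X \<omega>) = c * Beta (real n + 1) c"
proof -
  have "indep_var borel (id \<circ> X) borel ((\<lambda>y. c * y) \<circ> Y)"
    using indep by (rule indep_var_compose) auto
  then have "emeasure M {\<omega> \<in> space M. c * Y \<omega> < X \<omega>}
      = (\<integral>\<^sup>+x. exponential_density l x * emeasure M {\<omega> \<in> space M. c * Y \<omega> < x} \<partial>lborel)"
    using emeasure_less_indep_var_density[OF _ D] by (simp add: comp_def)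
  also have "\<dots> = (\<integral>\<^sup>+x. ennreal (exponential_density l x * (1 - exp (- (x / c) * l)) ^ n) \<partial>lborel)"
  proof (intro nn_integral_cong)
    fix x :: real
    have "{\<omega> \<in> space M. c * Y \<omega> < x} = {\<omega> \<in> space M. Y \<omega> < x / c}"
      using assms by (auto simp: field_simps)
    then show "exponential_density l x * emeasure M {\<omega> \<in> space M. c * Y \<omega> < x}
        = ennreal (exponential_density l x * (1 - exp (- (x / c) * l)) ^ n)"
      using assms cdf[of "x / c"]
      by (cases "x < 0") (simp_all add: exponential_density_def emeasure_eq_measure ennreal_mult')
  qed
  also have "\<dots> = ennreal (c * Beta (real n + 1) c)"
    by (rule nn_integral_exponential_density_cdf_power[OF \<open>0 < c\<close> \<open>0 < l\<close>])
  finally show ?thesis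
    using assms by (simp add: emeasure_eq_measure Beta_def Gamma_real_pos)
qed

lemma (in prob_space) prob_scaled_Max_less_exponential:
  fixes X :: "'a \<Rightarrow> real" and Xs :: "nat \<Rightarrow> 'a \<Rightarrow> real"
  assumes "0 < l" "0 < c" "1 \<le> n"
    and DX: "distributed M lborel X (exponential_density l)"
    and DXs: "\<And>i. i \<in> {1..n} \<Longrightarrow> distributed M lborel (Xs i) (exponential_density l)"
    and indep: "indep_vars (\<lambda>_. borel) (\<lambda>i. if i = 0 then X else Xs i) {0..n}"
  shows "\<P>(\<omega> in M. c * Max ((\<lambda>i. Xs i \<omega>) ` {1..n}) < X \<omega>) = real n * Beta (1 + c) (real n)"
proof -
  define Z where "Z = (\<lambda>i. if i = 0 then X else Xs i)"
  have Z_image: "(\<lambda>i. Z i \<omega>) ` {1..n} = (\<lambda>i. Xs i \<omega>) ` {1..n}" for \<omega>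
    by (auto simp: Z_def)
  have "{0..n} = insert 0 {1..n}"
    by auto
  then have "indep_var borel (Z 0) borel (\<lambda>\<omega>. Max ((\<lambda>i. Z i \<omega>) ` {1..n}))"
    using indep by (intro indep_vars_Max) (auto simp: Z_def)
  then have indep_Max: "indep_var borel X borel (\<lambda>\<omega>. Max ((\<lambda>i. Xs i \<omega>) ` {1..n}))"
    by (simp add: Z_image Z_def)
  have cdf_Max: "\<P>(\<omega> in M. Max ((\<lambda>i. Xs i \<omega>) ` {1..n}) < t) = (1 - exp (- t * l)) ^ n"
    if "0 \<le> t" for t
  proof -
    have "indep_vars (\<lambda>_. borel) Z {1..n}"
      using indep unfolding Z_def[symmetric] by (rule indep_vars_subset) auto
    then have "\<P>(\<omega> in M. Max ((\<lambda>i. Xs i \<omega>) ` {1..n}) < t) = (\<Prod>i\<in>{1..n}. \<P>(\<omega> in M. Z i \<omega> < t))"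
      using assms unfolding Z_image[symmetric] by (intro prob_Max_less) auto
    also have "\<dots> = (\<Prod>i\<in>{1..n}. 1 - exp (- t * l))"
      using that assms by (intro prod.cong refl) (simp add: Z_def exponential_distributedD_lt[OF DXs])
    finally show ?thesis
      by simp
  qed
  have "\<P>(\<omega> in M. c * Max ((\<lambda>i. Xs i \<omega>) ` {1..n}) < X \<omega>) = c * Beta (real n + 1) c"
    using cdf_Max by (rule prob_scaled_less_exponential[OF assms(1,2) DX indep_Max])
  also have "\<dots> = real n * Beta (1 + c) (real n)"
    using assms by (intro mult_Beta_plus1_swap) auto
  finally show ?thesis .
qed

lemma powr_ceiling_log_bounds:
  fixes b y :: real
  assumes "1 < b" "0 < y"
  shows "y \<le> b powr real_of_int \<lceil>log b y\<rceil>" and "b powr real_of_int \<lceil>log b y\<rceil> < b * y"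
proof -
  have "y = b powr log b y"
    using assms by simp
  also have "\<dots> \<le> b powr real_of_int \<lceil>log b y\<rceil>"
    using assms by (intro powr_mono) auto
  finally show "y \<le> b powr real_of_int \<lceil>log b y\<rceil>" .
  have "b powr real_of_int \<lceil>log b y\<rceil> < b powr (log b y + 1)"
    using assms by (intro powr_less_mono) linarith+
  also have "\<dots> = b * y"
    using assms by (simp add: powr_add)
  finally show "b powr real_of_int \<lceil>log b y\<rceil> < b * y" .
qed

lemma (in prob_space) prob_ceiling_log_tail_bounds:
  fixes X Y :: "'a \<Rightarrow> real" and \<rho> :: real
  assumes "1 < \<rho>" and [measurable]: "X \<in> borel_measurable M" "Y \<in> borel_measurable M"
    and pos: "AE \<omega> in M. 0 < Y \<omega>"
  shows "\<P>(\<omega> in M. \<rho> * Y \<omega> < X \<omega>) \<le> \<P>(\<omega> in M. \<rho> powr real_of_int \<lceil>log \<rho> (Y \<omega>)\<rceil> < X \<omega>)"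
    and "\<P>(\<omega> in M. \<rho> powr real_of_int \<lceil>log \<rho> (Y \<omega>)\<rceil> < X \<omega>) \<le> \<P>(\<omega> in M. Y \<omega> < X \<omega>)"
proof -
  have "AE \<omega> in M. \<rho> * Y \<omega> < X \<omega> \<longrightarrow> \<rho> powr real_of_int \<lceil>log \<rho> (Y \<omega>)\<rceil> < X \<omega>"
    using pos by eventually_elim (use powr_ceiling_log_bounds(2) assms(1) in fastforce)
  then show "\<P>(\<omega> in M. \<rho> * Y \<omega> < X \<omega>) \<le> \<P>(\<omega> in M. \<rho> powr real_of_int \<lceil>log \<rho> (Y \<omega>)\<rceil> < X \<omega>)"
    by (intro finite_measure_mono_AE) (auto elim!: eventually_mono)
  have "AE \<omega> in M. \<rho> powr real_of_int \<lceil>log \<rho> (Y \<omega>)\<rceil> < X \<omega> \<longrightarrow> Y \<omega> < X \<omega>"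
    using pos by eventually_elim (use powr_ceiling_log_bounds(1) assms(1) in fastforce)
  then show "\<P>(\<omega> in M. \<rho> powr real_of_int \<lceil>log \<rho> (Y \<omega>)\<rceil> < X \<omega>) \<le> \<P>(\<omega> in M. Y \<omega> < X \<omega>)"
    by (intro finite_measure_mono_AE) (auto elim!: eventually_mono)
qed

lemma (in prob_space) prob_ceiling_log_last_bound:
  fixes X Y :: "'a \<Rightarrow> real" and \<rho> :: real
  assumes "1 < \<rho>" and [measurable]: "X \<in> borel_measurable M" "Y \<in> borel_measurable M"
    and pos: "AE \<omega> in M. 0 < Y \<omega>"
  shows "\<P>(\<omega> in M. \<rho> powr (real_of_int \<lceil>log \<rho> (Y \<omega>)\<rceil> - 1) < X \<omega> \<and> X \<omega> \<le> \<rho> powr real_of_int \<lceil>log \<rho> (Y \<omega>)\<rceil>)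
    \<le> \<P>(\<omega> in M. Y \<omega> / \<rho> < X \<omega>) - \<P>(\<omega> in M. \<rho> * Y \<omega> < X \<omega>)"
proof -
  define k where "k \<omega> = real_of_int \<lceil>log \<rho> (Y \<omega>)\<rceil>" for \<omega>
  have [measurable]: "k \<in> borel_measurable M"
    unfolding k_def by measurable
  have "\<rho> powr (k \<omega> - 1) < \<rho> powr k \<omega>" for \<omega>
    using assms by simp
  then have "{\<omega> \<in> space M. \<rho> powr k \<omega> < X \<omega>} \<subseteq> {\<omega> \<in> space M. \<rho> powr (k \<omega> - 1) < X \<omega>}"
    by (auto intro: less_trans)
  then have "\<P>(\<omega> in M. \<rho> powr (k \<omega> - 1) < X \<omega> \<and> X \<omega> \<le> \<rho> powr k \<omega>)
      = \<P>(\<omega> in M. \<rho> powr (k \<omega> - 1) < X \<omega>) - \<P>(\<omega> in M. \<rho> powr k \<omega> < X \<omega>)"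
    by (subst finite_measure_Diff[symmetric]) (auto intro!: arg_cong[where f=prob])
  also have "\<dots> \<le> \<P>(\<omega> in M. Y \<omega> / \<rho> < X \<omega>) - \<P>(\<omega> in M. \<rho> * Y \<omega> < X \<omega>)"
  proof -
    have "AE \<omega> in M. \<rho> powr (k \<omega> - 1) < X \<omega> \<longrightarrow> Y \<omega> / \<rho> < X \<omega>"
    proof (rule eventually_mono[OF pos], intro impI)
      fix \<omega> assume "0 < Y \<omega>" "\<rho> powr (k \<omega> - 1) < X \<omega>"
      moreover have "Y \<omega> / \<rho> \<le> \<rho> powr k \<omega> / \<rho>"
        using powr_ceiling_log_bounds(1)[OF assms(1) \<open>0 < Y \<omega>\<close>] assms(1) by (simp add: k_def divide_right_mono)
      ultimately show "Y \<omega> / \<rho> < X \<omega>"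
        using assms(1) by (simp add: powr_diff)
    qed
    then have "\<P>(\<omega> in M. \<rho> powr (k \<omega> - 1) < X \<omega>) \<le> \<P>(\<omega> in M. Y \<omega> / \<rho> < X \<omega>)"
      by (intro finite_measure_mono_AE) (auto elim!: eventually_mono)
    then show ?thesis
      using prob_ceiling_log_tail_bounds(1)[OF assms] by (simp add: k_def)
  qed
  finally show ?thesis
    by (simp only: k_def)
qed

theorem theorem4:
  fixes M :: "'a measure" and X :: "'a \<Rightarrow> real" and Xs :: "nat \<Rightarrow> 'a \<Rightarrow> real"
    and l \<rho> :: real and n :: nat
  assumes "prob_space M"
    and "l > 0" and "\<rho> > 1" and "n \<ge> 1"
    and "distributed M lborel X (exponential_density l)"
    and "\<And>i. i \<in> {1..n} \<Longrightarrow> distributed M lborel (Xs i) (exponential_density l)"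
    and "prob_space.indep_vars M (\<lambda>_. borel) (\<lambda>i. if i = 0 then X else Xs i) {0..n}"
  shows "(let J = (\<lambda>\<omega>. log \<rho> (Max ((\<lambda>i. Xs i \<omega>) ` {1..n})));
              p_last = measure M {\<omega> \<in> space M.
                 \<rho> powr (real_of_int \<lceil>J \<omega>\<rceil> - 1) < X \<omega> \<and> X \<omega> \<le> \<rho> powr (real_of_int \<lceil>J \<omega>\<rceil>)};
              p_tail = measure M {\<omega> \<in> space M. X \<omega> > \<rho> powr (real_of_int \<lceil>J \<omega>\<rceil>)}
          in p_last \<le> real n * Beta (1 + 1 / \<rho>) (real n) - real n * Beta (1 + \<rho>) (real n)
           \<and> real n * Beta (1 + \<rho>) (real n) \<le> p_tail
           \<and> p_tail \<le> 1 / (real n + 1))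
     \<and> (\<lambda>m::nat. real m * Beta (1 + 1 / \<rho>) (real m) - real m * Beta (1 + \<rho>) (real m))
         \<sim>[at_top] (\<lambda>m. Gamma (1 + 1 / \<rho>) / real m powr (1 / \<rho>) - Gamma (1 + \<rho>) / real m powr \<rho>)
     \<and> (\<lambda>m::nat. Gamma (1 + \<rho>) / real m powr \<rho>) \<sim>[at_top] (\<lambda>m. real m * Beta (1 + \<rho>) (real m))
     \<and> (\<lambda>m::nat. 1 / (real m + 1)) \<sim>[at_top] (\<lambda>m. 1 / real m)"
proof -
  interpret prob_space M
    by (rule assms(1))
  define Y where "Y \<omega> = Max ((\<lambda>i. Xs i \<omega>) ` {1..n})" for \<omega>
  have [measurable]: "Xs i \<in> borel_measurable M" if "i \<in> {1..n}" for i
    using assms(6)[OF that] by (simp add: distributed_def)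
  have X_meas[measurable]: "X \<in> borel_measurable M" and Y_meas[measurable]: "Y \<in> borel_measurable M"
    using assms(5) unfolding Y_def by (auto simp: distributed_def intro!: borel_measurable_Max)
  have "AE \<omega> in M. 0 < Xs 1 \<omega>"
    using assms(2,4) by (intro AE_exponential_distributed_pos[OF assms(6)]) auto
  then have "AE \<omega> in M. 0 < Y \<omega>"
    by eventually_elim (use assms(4) in \<open>auto simp: Y_def Max_gr_iff\<close>)
  note bounds = prob_ceiling_log_tail_bounds[OF assms(3) X_meas Y_meas this]
    prob_ceiling_log_last_bound[OF assms(3) X_meas Y_meas this]
  have P: "\<P>(\<omega> in M. c * Y \<omega> < X \<omega>) = real n * Beta (1 + c) (real n)" if "0 < c" for c
    unfolding Y_def using assms that by (intro prob_scaled_Max_less_exponential) auto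
  have "\<P>(\<omega> in M. Y \<omega> < X \<omega>) = 1 / (real n + 1)" "\<P>(\<omega> in M. Y \<omega> / \<rho> < X \<omega>) = real n * Beta (1 + 1 / \<rho>) (real n)"
    using P[of 1] P[of "1 / \<rho>"] mult_Beta_2_left[of "real n"] assms(3,4) by (simp_all add: one_add_one)
  then have "\<P>(\<omega> in M. \<rho> powr (real_of_int \<lceil>log \<rho> (Y \<omega>)\<rceil> - 1) < X \<omega> \<and> X \<omega> \<le> \<rho> powr real_of_int \<lceil>log \<rho> (Y \<omega>)\<rceil>)
        \<le> real n * Beta (1 + 1 / \<rho>) (real n) - real n * Beta (1 + \<rho>) (real n)
      \<and> real n * Beta (1 + \<rho>) (real n) \<le> \<P>(\<omega> in M. \<rho> powr real_of_int \<lceil>log \<rho> (Y \<omega>)\<rceil> < X \<omega>)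
      \<and> \<P>(\<omega> in M. \<rho> powr real_of_int \<lceil>log \<rho> (Y \<omega>)\<rceil> < X \<omega>) \<le> 1 / (real n + 1)"
    using bounds P[of \<rho>] assms(3) by simp
  moreover have "(\<lambda>m::nat. 1 / (real m + 1)) \<sim>[at_top] (\<lambda>m. 1 / real m)"
    by real_asymp
  ultimately show ?thesis
    using Beta_bounds_asymp_equiv[OF assms(3)] unfolding Let_def Y_def by simp
qed

end
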